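(* Let $r\ge 2$ be an integer and let $H$ be a graph that admits a proper $r$-colouring whose colour classes have sizes $\ell_1\ge \ell_2\ge\dots\ge \ell_r>0$. Let $x\in\left(0,\frac{1}{|V(H)|}\right)$, let $n$ be a positive integer, and set $\delta:=(r-2+x\ell_r)\frac{n}{r-1}$. Then every $n$-vertex graph $G$ with at least $(r-2+x|V(H)|)\frac{n}{r-1}$ vertices of degree at least $\delta$ has fractional hom$_H$-cover number at least $xn$.
   Context: Let $G^H$ denote the set of all graph homomorphisms $h:H\to G$, i.e. maps $h:V(H)\to V(G)$ such that $uv\in E(H)$ implies $h(u)h(v)\in E(G)$. A fractional hom$_H$-cover of $G$ is a function $c:V(G)\to[0,1]$ such that for every homomorphism $h\in G^H$, $\sum_{v\in V(G)} c(v)\,|h^{-1}(v)|\ge 1$; its size is $\sum_{v\in V(G)}c(v)$. The fractional hom$_H$-cover number of $G$ is the minimum size of a fractional hom$_H$-cover of $G$. *)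

theory Defs
  imports Complex_Main "HOL-Library.FuncSet"
begin

definition graph :: "'a set \<Rightarrow> ('a \<Rightarrow> 'a \<Rightarrow> bool) \<Rightarrow> bool" where
  "graph V E \<longleftrightarrow> finite V \<and> (\<forall>u v. E u v \<longrightarrow> u \<in> V \<and> v \<in> V \<and> u \<noteq> v \<and> E v u)"

definition degree :: "'a set \<Rightarrow> ('a \<Rightarrow> 'a \<Rightarrow> bool) \<Rightarrow> 'a \<Rightarrow> nat" where
  "degree V E v = card {w \<in> V. E v w}"

definition homs :: "'b set \<Rightarrow> ('b \<Rightarrow> 'b \<Rightarrow> bool) \<Rightarrow> 'a set \<Rightarrow> ('a \<Rightarrow> 'a \<Rightarrow> bool) \<Rightarrow> ('b \<Rightarrow> 'a) set" where
  "homs VH EH VG EG = {h \<in> VH \<rightarrow>\<^sub>E VG. \<forall>u\<in>VH. \<forall>v\<in>VH. EH u v \<longrightarrow> EG (h u) (h v)}"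

definition frac_hom_cover :: "'b set \<Rightarrow> ('b \<Rightarrow> 'b \<Rightarrow> bool) \<Rightarrow> 'a set \<Rightarrow> ('a \<Rightarrow> 'a \<Rightarrow> bool) \<Rightarrow> ('a \<Rightarrow> real) \<Rightarrow> bool" where
  "frac_hom_cover VH EH VG EG c \<longleftrightarrow>
     (\<forall>v\<in>VG. 0 \<le> c v \<and> c v \<le> 1) \<and>
     (\<forall>h\<in>homs VH EH VG EG. (\<Sum>v\<in>VG. c v * real (card {u \<in> VH. h u = v})) \<ge> 1)"

definition frac_hom_cover_number :: "'b set \<Rightarrow> ('b \<Rightarrow> 'b \<Rightarrow> bool) \<Rightarrow> 'a set \<Rightarrow> ('a \<Rightarrow> 'a \<Rightarrow> bool) \<Rightarrow> real" where
  "frac_hom_cover_number VH EH VG EG = Inf {(\<Sum>v\<in>VG. c v) | c. frac_hom_cover VH EH VG EG c}"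

end

theory Submission
  imports Defs
begin

text \<open>
  Given a fractional cover c, pick greedily a clique v_1, ..., v_r of G: each v_k with k < r is
  a vertex of degree at least \<delta> adjacent to v_1, ..., v_(k-1) and of minimal weight c among
  such vertices, and v_r is a common neighbour of v_1, ..., v_(r-1) of minimal weight. The degree
  conditions leave at least x n (l_k + ... + l_r) candidates at step k, all of weight at least
  c(v_k). Mapping colour class i of H to v_i is a homomorphism, so 1 \<le> \<Sum>_k l_k c(v_k);
  Abel summation against the tail sums l_k + ... + l_r and the layer-cake bound by the level
  sets of c then give x n \<le> \<Sum>_w c(w).
\<close>

lemma sum_mult_card_fibres:
  fixes c :: "'a \<Rightarrow> 'c::comm_semiring_1"
  assumes "finite A" "finite B" "h ` A \<subseteq> B"
  shows "(\<Sum>b\<in>B. c b * of_nat (card {a \<in> A. h a = b})) = (\<Sum>a\<in>A. c (h a))"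
proof -
  have "(\<Sum>a\<in>A. c (h a)) = (\<Sum>b\<in>B. \<Sum>a\<in>{a \<in> A. h a = b}. c (h a))"
    using sum.group[OF assms(1,2,3), of "\<lambda>a. c (h a)"] by simp
  also have "\<dots> = (\<Sum>b\<in>B. c b * of_nat (card {a \<in> A. h a = b}))"
    by (rule sum.cong) (auto simp: mult.commute)
  finally show ?thesis by simp
qed

lemma card_eq_sum_card_fibres:
  fixes h :: "'a \<Rightarrow> nat"
  assumes "finite A" "h ` A \<subseteq> {1..r}"
  shows "card A = (\<Sum>k=1..r. card {a \<in> A. h a = k})"
  using sum_mult_card_fibres[where c="\<lambda>_. 1::nat", OF assms(1) finite_atLeastAtMost assms(2)] by simp

lemma sum_mult_eq_sum_diff_mult_tail_sums:
  fixes a l :: "nat \<Rightarrow> 'c::comm_ring"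
  assumes "a 0 = 0"
  shows "(\<Sum>k=1..m. l k * a k) = (\<Sum>k=1..m. (a k - a (k - 1)) * (\<Sum>j=k..m. l j))"
proof (induction m)
  case 0
  then show ?case by simp
next
  case (Suc m)
  have tail: "(\<Sum>j=k..Suc m. l j) = (\<Sum>j=k..m. l j) + l (Suc m)" if "k \<le> Suc m" for k
    using that by simp
  have telescope: "(\<Sum>k=1..n. a k - a (k - 1)) = a n" for n
    by (induction n) (simp_all add: assms)
  have "(\<Sum>k=1..Suc m. (a k - a (k - 1)) * (\<Sum>j=k..Suc m. l j))
      = (\<Sum>k=1..m. (a k - a (k - 1)) * (\<Sum>j=k..m. l j))
        + (\<Sum>k=1..m. a k - a (k - 1)) * l (Suc m) + (a (Suc m) - a m) * l (Suc m)"
    by (simp add: tail distrib_left sum.distrib sum_distrib_right)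
  also have "\<dots> = (\<Sum>k=1..Suc m. l k * a k)"
    by (simp only: Suc.IH[symmetric] telescope) (simp add: algebra_simps)
  finally show ?case by simp
qed

lemma sum_diff_mult_card_level_sets_le:
  fixes a :: "nat \<Rightarrow> real" and c :: "'a \<Rightarrow> real"
  assumes "finite V" "\<forall>w\<in>V. 0 \<le> c w" "a 0 = 0" "mono a"
  shows "(\<Sum>k=1..m. (a k - a (k - 1)) * real (card {w\<in>V. a k \<le> c w})) \<le> (\<Sum>w\<in>V. c w)"
proof -
  have pointwise: "(\<Sum>k=1..n. (a k - a (k - 1)) * (if a k \<le> t then 1 else 0)) \<le> min t (a n)"
    if "0 \<le> t" for t n
  proof (induction n)
    case 0
    then show ?case using that assms(3) by simp
  next
    case (Suc n)
    moreover have "a n \<le> a (Suc n)" using assms(4) by (simp add: monoD)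
    ultimately show ?case by (auto simp: min_def split: if_splits)
  qed
  have card_level: "real (card {w\<in>V. a k \<le> c w}) = (\<Sum>w\<in>V. if a k \<le> c w then 1 else 0)" for k
    using assms(1) by (simp add: sum.If_cases Int_def)
  have "(\<Sum>k=1..m. (a k - a (k - 1)) * real (card {w\<in>V. a k \<le> c w}))
      = (\<Sum>k=1..m. \<Sum>w\<in>V. (a k - a (k - 1)) * (if a k \<le> c w then 1 else 0))"
    by (simp add: card_level sum_distrib_left)
  also have "\<dots> = (\<Sum>w\<in>V. \<Sum>k=1..m. (a k - a (k - 1)) * (if a k \<le> c w then 1 else 0))"
    by (rule sum.swap)
  also have "\<dots> \<le> (\<Sum>w\<in>V. c w)"
    by (rule sum_mono) (use pointwise assms(2) in fastforce)
  finally show ?thesis .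
qed

lemma sum_mult_le_sum_of_level_set_bounds:
  fixes b l :: "nat \<Rightarrow> real" and c :: "'a \<Rightarrow> real"
  assumes "finite V" "\<forall>w\<in>V. 0 \<le> c w" "\<forall>k\<in>{1..m}. 0 \<le> l k"
    and level: "\<forall>k\<in>{1..m}. (\<Sum>j=k..m. l j) \<le> real (card {w\<in>V. b k \<le> c w})"
  shows "(\<Sum>k=1..m. l k * b k) \<le> (\<Sum>w\<in>V. c w)"
proof -
  \<comment> \<open>The level sets of the running maximum a are level sets of an earlier b i (or all of V),
    and the required bounds only weaken as i grows.\<close>
  define a where "a k = Max (insert 0 (b ` {1..k}))" for k
  have a0: "a 0 = 0" by (simp add: a_def)
  have "mono a"
    unfolding mono_iff_le_Suc a_def by (intro allI Max_mono) auto
  have b_le_a: "b k \<le> a k" if "k \<in> {1..m}" for k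
    unfolding a_def using that by (intro Max_ge) auto
  have level_a: "(\<Sum>j=k..m. l j) \<le> real (card {w\<in>V. a k \<le> c w})" if k: "k \<in> {1..m}" for k
  proof -
    have "a k \<in> insert 0 (b ` {1..k})"
      unfolding a_def by (rule Max_in) auto
    then consider "a k = 0" | i where "i \<in> {1..k}" "a k = b i" by auto
    then show ?thesis
    proof cases
      case 1
      have "card {w\<in>V. b k \<le> c w} \<le> card {w\<in>V. a k \<le> c w}"
        using 1 assms(1,2) by (intro card_mono) auto
      then show ?thesis using level k by (meson of_nat_le_iff order_trans)
    next
      case 2
      have "(\<Sum>j=k..m. l j) \<le> (\<Sum>j=i..m. l j)"
        using 2(1) k assms(3) by (intro sum_mono2) auto
      then show ?thesis using level 2 k by force
    qed
  qed
  have "(\<Sum>k=1..m. l k * b k) \<le> (\<Sum>k=1..m. l k * a k)"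
    using assms(3) b_le_a by (intro sum_mono mult_left_mono) auto
  also have "\<dots> = (\<Sum>k=1..m. (a k - a (k - 1)) * (\<Sum>j=k..m. l j))"
    by (rule sum_mult_eq_sum_diff_mult_tail_sums[of a, OF a0])
  also have "\<dots> \<le> (\<Sum>k=1..m. (a k - a (k - 1)) * real (card {w\<in>V. a k \<le> c w}))"
    using level_a \<open>mono a\<close> by (intro sum_mono mult_left_mono) (auto simp: monoD)
  also have "\<dots> \<le> (\<Sum>w\<in>V. c w)"
    by (rule sum_diff_mult_card_level_sets_le[OF assms(1,2) a0 \<open>mono a\<close>])
  finally show ?thesis .
qed

definition common_nbrs :: "'a set \<Rightarrow> ('a \<Rightarrow> 'a \<Rightarrow> bool) \<Rightarrow> (nat \<Rightarrow> 'a) \<Rightarrow> nat \<Rightarrow> 'a set" where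
  "common_nbrs T E v k = {w \<in> T. \<forall>j\<in>{1..k}. E (v j) w}"

lemma common_nbrs_subset: "common_nbrs T E v k \<subseteq> T"
  by (auto simp: common_nbrs_def)

lemma common_nbrs_Suc: "common_nbrs T E v (Suc k) = common_nbrs T E v k \<inter> {w. E (v (Suc k)) w}"
  unfolding common_nbrs_def by (auto simp: atLeastAtMostSuc_conv)

lemma common_nbrs_cong:
  "(\<And>j. j \<in> {1..k} \<Longrightarrow> v j = v' j) \<Longrightarrow> common_nbrs T E v k = common_nbrs T E v' k"
  by (auto simp: common_nbrs_def)

lemma card_common_nbrs_ge:
  assumes "graph V E" "T \<subseteq> V" "\<forall>j\<in>{1..k}. v j \<in> V \<and> \<delta> \<le> real (degree V E (v j))"
  shows "real (card T) - real k * (real (card V) - \<delta>) \<le> real (card (common_nbrs T E v k))"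
  using assms(3)
proof (induction k)
  case 0
  then show ?case by (simp add: common_nbrs_def)
next
  case (Suc k)
  define A where "A = common_nbrs T E v k"
  define N where "N = {w \<in> V. E (v (Suc k)) w}"
  have "finite V" using assms(1) by (simp add: graph_def)
  have "A \<subseteq> V" unfolding A_def by (rule order_trans[OF common_nbrs_subset assms(2)])
  then have A_N: "common_nbrs T E v (Suc k) = A \<inter> N"
    unfolding common_nbrs_Suc A_def N_def by blast
  have "card A \<le> card ((A \<inter> N) \<union> (V - N))"
    using \<open>finite V\<close> \<open>A \<subseteq> V\<close> by (intro card_mono) (auto intro: finite_subset)
  also have "\<dots> \<le> card (A \<inter> N) + card (V - N)"
    by (rule card_Un_le)
  finally have "real (card A) \<le> real (card (A \<inter> N)) + real (card (V - N))"
    by linarith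
  moreover have "real (card (V - N)) = real (card V) - real (card N)"
    using \<open>finite V\<close> by (subst card_Diff_subset) (auto simp: N_def of_nat_diff card_mono)
  moreover have "\<delta> \<le> real (card N)"
    using Suc.prems by (auto simp: N_def degree_def)
  moreover have "real (card T) - real k * (real (card V) - \<delta>) \<le> real (card A)"
    using Suc by (simp add: A_def)
  ultimately show ?case
    unfolding A_N by (simp add: algebra_simps)
qed

lemma greedy_min_sequence:
  fixes c :: "'a \<Rightarrow> 'b::linorder"
  assumes "\<And>k. k \<in> {1..m} \<Longrightarrow> finite (T k)"
    and "\<And>k v. k \<in> {1..m} \<Longrightarrow> \<forall>j\<in>{1..<k}. v j \<in> T j \<Longrightarrow> common_nbrs (T k) E v (k - 1) \<noteq> {}"
  shows "\<exists>v. \<forall>k\<in>{1..m}. v k \<in> common_nbrs (T k) E v (k - 1)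
              \<and> (\<forall>w\<in>common_nbrs (T k) E v (k - 1). c (v k) \<le> c w)"
  using assms
proof (induction m)
  case 0
  then show ?case by simp
next
  case (Suc m)
  have "\<exists>v. \<forall>k\<in>{1..m}. v k \<in> common_nbrs (T k) E v (k - 1)
              \<and> (\<forall>w\<in>common_nbrs (T k) E v (k - 1). c (v k) \<le> c w)"
  proof (rule Suc.IH)
    show "finite (T k)" if "k \<in> {1..m}" for k
      using that by (intro Suc.prems(1)) simp
    show "common_nbrs (T k) E v (k - 1) \<noteq> {}" if "k \<in> {1..m}" "\<forall>j\<in>{1..<k}. v j \<in> T j" for k v
      using that by (intro Suc.prems(2)) simp_all
  qed
  then obtain v where v: "\<forall>k\<in>{1..m}. v k \<in> common_nbrs (T k) E v (k - 1)
              \<and> (\<forall>w\<in>common_nbrs (T k) E v (k - 1). c (v k) \<le> c w)" ..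
  define C where "C = common_nbrs (T (Suc m)) E v m"
  have "v j \<in> T j" if "j \<in> {1..m}" for j
    using v that common_nbrs_subset[of "T j" E v "j - 1"] by auto
  then have "common_nbrs (T (Suc m)) E v (Suc m - 1) \<noteq> {}"
    by (intro Suc.prems(2)) auto
  then have "C \<noteq> {}" by (simp add: C_def)
  have "finite C"
    unfolding C_def by (rule finite_subset[OF common_nbrs_subset Suc.prems(1)]) simp
  define w where "w = arg_min_on c C"
  have w: "w \<in> C" "\<forall>w'\<in>C. c w \<le> c w'"
    unfolding w_def using \<open>C \<noteq> {}\<close> \<open>finite C\<close> by (auto intro: arg_min_if_finite arg_min_least)
  show ?case
  proof (intro exI[of _ "v(Suc m := w)"] ballI)
    fix k assume k: "k \<in> {1..Suc m}"
    have unchanged: "common_nbrs (T k) E (v(Suc m := w)) (k - 1) = common_nbrs (T k) E v (k - 1)"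
      using k by (intro common_nbrs_cong) auto
    show "(v(Suc m := w)) k \<in> common_nbrs (T k) E (v(Suc m := w)) (k - 1)
        \<and> (\<forall>w'\<in>common_nbrs (T k) E (v(Suc m := w)) (k - 1). c ((v(Suc m := w)) k) \<le> c w')"
    proof (cases "k = Suc m")
      case True
      then show ?thesis using w unfolding unchanged by (simp add: C_def)
    next
      case False
      then have "k \<in> {1..m}" using k by auto
      then show ?thesis using v False unfolding unchanged by simp
    qed
  qed
qed

lemma colouring_into_clique_in_homs:
  fixes col :: "'b \<Rightarrow> nat"
  assumes "\<forall>u\<in>VH. col u \<in> {1..r}" "\<forall>u\<in>VH. \<forall>u'\<in>VH. EH u u' \<longrightarrow> col u \<noteq> col u'"
    and "\<forall>k\<in>{1..r}. v k \<in> VG" "\<forall>i\<in>{1..r}. \<forall>j\<in>{1..r}. i \<noteq> j \<longrightarrow> EG (v i) (v j)"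
  shows "restrict (v \<circ> col) VH \<in> homs VH EH VG EG"
  using assms by (auto simp: homs_def)

lemma frac_hom_cover_clique_ge:
  fixes col :: "'b \<Rightarrow> nat"
  assumes cover: "frac_hom_cover VH EH VG EG c" and "finite VG" "finite VH"
    and col: "\<forall>u\<in>VH. col u \<in> {1..r}" "\<forall>u\<in>VH. \<forall>u'\<in>VH. EH u u' \<longrightarrow> col u \<noteq> col u'"
    and clique: "\<forall>k\<in>{1..r}. v k \<in> VG" "\<forall>i\<in>{1..r}. \<forall>j\<in>{1..r}. i \<noteq> j \<longrightarrow> EG (v i) (v j)"
  shows "1 \<le> (\<Sum>k=1..r. c (v k) * real (card {u \<in> VH. col u = k}))"
proof -
  let ?h = "restrict (v \<circ> col) VH"
  have "?h \<in> homs VH EH VG EG"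
    by (rule colouring_into_clique_in_homs[OF col clique])
  then have "1 \<le> (\<Sum>w\<in>VG. c w * real (card {u \<in> VH. ?h u = w}))"
    using cover unfolding frac_hom_cover_def by blast
  also have "\<dots> = (\<Sum>u\<in>VH. c (?h u))"
    using \<open>finite VG\<close> \<open>finite VH\<close> col clique by (intro sum_mult_card_fibres) auto
  also have "\<dots> = (\<Sum>u\<in>VH. c (v (col u)))"
    by simp
  also have "\<dots> = (\<Sum>k=1..r. c (v k) * real (card {u \<in> VH. col u = k}))"
    using \<open>finite VH\<close> col by (intro sum_mult_card_fibres[symmetric]) auto
  finally show ?thesis .
qed

lemma homs_image_subset: "h \<in> homs VH EH VG EG \<Longrightarrow> h ` VH \<subseteq> VG"
  by (auto simp: homs_def PiE_def Pi_def)

lemma frac_hom_cover_const_one: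
  assumes "finite VG" "finite VH" "VH \<noteq> {}"
  shows "frac_hom_cover VH EH VG EG (\<lambda>_. 1)"
  unfolding frac_hom_cover_def
proof (intro conjI ballI)
  fix h assume "h \<in> homs VH EH VG EG"
  then have "(\<Sum>v\<in>VG. 1 * real (card {u \<in> VH. h u = v})) = real (card VH)"
    by (subst sum_mult_card_fibres[OF assms(2,1) homs_image_subset]) simp_all
  then show "1 \<le> (\<Sum>v\<in>VG. 1 * real (card {u \<in> VH. h u = v}))"
    using assms(2,3) by (simp add: Suc_leI card_gt_0_iff)
qed auto

lemma sum_frac_hom_cover_ge:
  fixes col :: "'b \<Rightarrow> nat" and t :: real
  assumes cover: "frac_hom_cover VH EH VG EG c" and "graph VG EG" "finite VH"
    and col: "\<forall>u\<in>VH. col u \<in> {1..r}" "\<forall>u\<in>VH. \<forall>u'\<in>VH. EH u u' \<longrightarrow> col u \<noteq> col u'"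
    and "0 < t" "0 < card {u \<in> VH. col u = r}"
    and T: "\<forall>k\<in>{1..r}. T k \<subseteq> VG"
    and many_common_nbrs: "\<And>k v. k \<in> {1..r} \<Longrightarrow> \<forall>j\<in>{1..<k}. v j \<in> T j \<Longrightarrow>
                t * (\<Sum>j=k..r. real (card {u \<in> VH. col u = j})) \<le> real (card (common_nbrs (T k) EG v (k - 1)))"
  shows "t \<le> (\<Sum>w\<in>VG. c w)"
proof -
  define ell where "ell j = real (card {u \<in> VH. col u = j})" for j
  have "finite VG" using \<open>graph VG EG\<close> by (simp add: graph_def)
  have "\<forall>w\<in>VG. 0 \<le> c w" using cover by (simp add: frac_hom_cover_def)
  have "common_nbrs (T k) EG v (k - 1) \<noteq> {}" if k: "k \<in> {1..r}" "\<forall>j\<in>{1..<k}. v j \<in> T j" for k v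
  proof -
    have "0 < t * ell r" using \<open>0 < t\<close> \<open>0 < card {u \<in> VH. col u = r}\<close> by (simp add: ell_def)
    also have "\<dots> \<le> t * (\<Sum>j=k..r. ell j)"
      using k \<open>0 < t\<close> by (intro mult_left_mono member_le_sum) (auto simp: ell_def)
    also have "\<dots> \<le> real (card (common_nbrs (T k) EG v (k - 1)))"
      using many_common_nbrs[OF k] by (simp add: ell_def)
    finally show ?thesis by auto
  qed
  moreover have "finite (T k)" if "k \<in> {1..r}" for k
    using T that \<open>finite VG\<close> finite_subset by blast
  ultimately obtain v where v: "\<forall>k\<in>{1..r}. v k \<in> common_nbrs (T k) EG v (k - 1)
      \<and> (\<forall>w\<in>common_nbrs (T k) EG v (k - 1). c (v k) \<le> c w)"
    using greedy_min_sequence[of r T EG c] by blast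
  have "v k \<in> VG" if k: "k \<in> {1..r}" for k
  proof -
    have "v k \<in> common_nbrs (T k) EG v (k - 1)" using v k by blast
    then show ?thesis using T k common_nbrs_subset[of "T k" EG v "k - 1"] by blast
  qed
  moreover have "EG (v i) (v j)" if "i \<in> {1..r}" "j \<in> {1..r}" "i \<noteq> j" for i j
  proof -
    have "EG (v i) (v j)" if "i \<in> {1..r}" "j \<in> {1..r}" "i < j" for i j
      using v that by (auto simp: common_nbrs_def)
    then show ?thesis
      using that \<open>graph VG EG\<close> unfolding graph_def by (metis linorder_neqE_nat)
  qed
  ultimately have "1 \<le> (\<Sum>k=1..r. c (v k) * ell k)"
    unfolding ell_def using frac_hom_cover_clique_ge[OF cover \<open>finite VG\<close> \<open>finite VH\<close> col] by blast
  then have "t * 1 \<le> t * (\<Sum>k=1..r. c (v k) * ell k)"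
    using \<open>0 < t\<close> by (intro mult_left_mono) auto
  then have "t \<le> (\<Sum>k=1..r. (t * ell k) * c (v k))"
    by (simp add: sum_distrib_left mult_ac)
  also have "\<dots> \<le> (\<Sum>w\<in>VG. c w)"
  proof (rule sum_mult_le_sum_of_level_set_bounds[OF \<open>finite VG\<close> \<open>\<forall>w\<in>VG. 0 \<le> c w\<close>])
    show "\<forall>k\<in>{1..r}. 0 \<le> t * ell k" using \<open>0 < t\<close> by (simp add: ell_def)
    show "\<forall>k\<in>{1..r}. (\<Sum>j=k..r. t * ell j) \<le> real (card {w \<in> VG. c (v k) \<le> c w})"
    proof
      fix k assume k: "k \<in> {1..r}"
      have "common_nbrs (T k) EG v (k - 1) \<subseteq> {w \<in> VG. c (v k) \<le> c w}"
        using v T k common_nbrs_subset[of "T k" EG v "k - 1"] by blast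
      then have "card (common_nbrs (T k) EG v (k - 1)) \<le> card {w \<in> VG. c (v k) \<le> c w}"
        using \<open>finite VG\<close> by (intro card_mono) auto
      moreover have "\<forall>j\<in>{1..<k}. v j \<in> T j"
        using v k common_nbrs_subset by fastforce
      ultimately show "(\<Sum>j=k..r. t * ell j) \<le> real (card {w \<in> VG. c (v k) \<le> c w})"
        using many_common_nbrs[OF k, of v] unfolding ell_def sum_distrib_left[symmetric] by linarith
    qed
  qed
  finally show ?thesis .
qed

lemma antitone_tail_sum_le:
  fixes ell :: "nat \<Rightarrow> nat" and x :: real
  assumes antitone: "\<forall>i\<in>{1..r}. \<forall>j\<in>{1..r}. i \<le> j \<longrightarrow> ell j \<le> ell i"
    and k: "k \<in> {1..<r}" and "0 \<le> x" and "x * (\<Sum>j=1..r. real (ell j)) \<le> 1"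
  shows "(real r - 1) * x * (\<Sum>j=k..r. real (ell j))
           \<le> real r - 2 + x * (\<Sum>j=1..r. real (ell j)) - (real k - 1) * (1 - x * real (ell r))"
proof -
  define P where "P = (\<Sum>j=1..<k. real (ell j))"
  define L where "L = (\<Sum>j=k..r. real (ell j))"
  have "{1..r} = {1..<k} \<union> {k..r}" using k by auto
  then have h: "(\<Sum>j=1..r. real (ell j)) = P + L"
    unfolding P_def L_def by (simp only:) (rule sum.union_disjoint, auto)
  have "(\<Sum>j=1..<k. real (ell k)) \<le> P"
    unfolding P_def using antitone k by (intro sum_mono) auto
  then have P_ge: "(real k - 1) * real (ell k) \<le> P"
    using k by (simp add: of_nat_diff)
  have "{k..r} = {k..<r} \<union> {r}" using k by auto
  then have "L = (\<Sum>j=k..<r. real (ell j)) + real (ell r)"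
    unfolding L_def by simp
  also have "(\<Sum>j=k..<r. real (ell j)) \<le> (\<Sum>j=k..<r. real (ell k))"
    using antitone k by (intro sum_mono) auto
  finally have L_le: "L \<le> (real r - real k) * real (ell k) + real (ell r)"
    using k by (simp add: of_nat_diff)
  have "(real k - 1) * L \<le> (real k - 1) * ((real r - real k) * real (ell k) + real (ell r))"
    using k L_le by (intro mult_left_mono) auto
  moreover have "(real r - real k) * ((real k - 1) * real (ell k)) \<le> (real r - real k) * P"
    using k P_ge by (intro mult_left_mono) auto
  ultimately have balance: "0 \<le> (real r - real k) * P + (real k - 1) * real (ell r) - (real k - 1) * L"
    by (simp add: algebra_simps)
  have "real r - 2 + x * (P + L) - (real k - 1) * (1 - x * real (ell r)) - (real r - 1) * x * L
      = (1 - x * (P + L)) * (real r - 1 - real k)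
        + x * ((real r - real k) * P + (real k - 1) * real (ell r) - (real k - 1) * L)"
    by (simp add: algebra_simps)
  moreover have "0 \<le> (1 - x * (P + L)) * (real r - 1 - real k)"
    using k \<open>x * (\<Sum>j=1..r. real (ell j)) \<le> 1\<close> h by auto
  moreover have "0 \<le> x * ((real r - real k) * P + (real k - 1) * real (ell r) - (real k - 1) * L)"
    using \<open>0 \<le> x\<close> balance by simp
  ultimately show ?thesis
    unfolding h L_def[symmetric] by linarith
qed

lemma scaled_tail_sum_le_greedy_bound:
  fixes ell :: "nat \<Rightarrow> nat" and x n s \<delta> :: real
  assumes "r \<ge> 2" "\<forall>i\<in>{1..r}. \<forall>j\<in>{1..r}. i \<le> j \<longrightarrow> ell j \<le> ell i"
    and k: "k \<in> {1..r}" and "0 \<le> x" "x * (\<Sum>j=1..r. real (ell j)) \<le> 1" "0 \<le> n"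
    and \<delta>: "\<delta> = (real r - 2 + x * real (ell r)) * n / (real r - 1)"
    and s: "(real r - 2 + x * (\<Sum>j=1..r. real (ell j))) * n / (real r - 1) \<le> s"
  shows "x * n * (\<Sum>j=k..r. real (ell j)) \<le> (if k < r then s else n) - real (k - 1) * (n - \<delta>)"
proof -
  have "real r - 1 > 0" using \<open>r \<ge> 2\<close> by simp
  have gap: "n - \<delta> = (1 - x * real (ell r)) * (n / (real r - 1))"
    using \<open>real r - 1 > 0\<close> unfolding \<delta> by (simp add: field_simps)
  show ?thesis
  proof (cases "k < r")
    case True
    then have "k \<in> {1..<r}" using k by simp
    have "x * n * (\<Sum>j=k..r. real (ell j)) = n / (real r - 1) * ((real r - 1) * x * (\<Sum>j=k..r. real (ell j)))"
      using \<open>real r - 1 > 0\<close> by simp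
    also have "\<dots> \<le> n / (real r - 1) * (real r - 2 + x * (\<Sum>j=1..r. real (ell j)) - (real k - 1) * (1 - x * real (ell r)))"
      using assms \<open>k \<in> {1..<r}\<close> \<open>real r - 1 > 0\<close>
      by (intro mult_left_mono antitone_tail_sum_le) auto
    also have "\<dots> = (real r - 2 + x * (\<Sum>j=1..r. real (ell j))) * (n / (real r - 1)) - (real k - 1) * (n - \<delta>)"
      unfolding gap by (simp only: algebra_simps)
    finally show ?thesis
      using True k s by (simp add: of_nat_diff)
  next
    case False
    then have "k = r" using k by simp
    then show ?thesis
      using \<open>real r - 1 > 0\<close> \<open>r \<ge> 2\<close> unfolding gap by (simp add: of_nat_diff field_simps)
  qed
qed

theorem proposition2p8:
  fixes VH :: "'b set" and EH :: "'b \<Rightarrow> 'b \<Rightarrow> bool"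
    and VG :: "'a set" and EG :: "'a \<Rightarrow> 'a \<Rightarrow> bool"
    and r n :: nat and col :: "'b \<Rightarrow> nat" and ell :: "nat \<Rightarrow> nat" and x \<delta> :: real
  assumes "r \<ge> 2"
    and "graph VH EH"
    and "\<forall>u\<in>VH. col u \<in> {1..r}"
    and "\<forall>u\<in>VH. \<forall>v\<in>VH. EH u v \<longrightarrow> col u \<noteq> col v"
    and "\<forall>i\<in>{1..r}. ell i = card {u \<in> VH. col u = i}"
    and "\<forall>i\<in>{1..r}. \<forall>j\<in>{1..r}. i \<le> j \<longrightarrow> ell j \<le> ell i"
    and "ell r > 0"
    and "0 < x" and "x < 1 / real (card VH)"
    and "n > 0"
    and "\<delta> = (real r - 2 + x * real (ell r)) * real n / (real r - 1)"
    and "graph VG EG" and "card VG = n"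
    and "real (card {v \<in> VG. real (degree VG EG v) \<ge> \<delta>})
           \<ge> (real r - 2 + x * real (card VH)) * real n / (real r - 1)"
  shows "frac_hom_cover_number VH EH VG EG \<ge> x * real n"
proof -
  have "finite VG" "finite VH" using assms(2,12) by (simp_all add: graph_def)
  have ell_sum: "(\<Sum>j=k..r. real (ell j)) = (\<Sum>j=k..r. real (card {u \<in> VH. col u = j}))"
    if "1 \<le> k" for k
    using assms(5) that by (intro sum.cong) auto
  have "card VH = (\<Sum>j=1..r. card {u \<in> VH. col u = j})"
    using assms(3) by (intro card_eq_sum_card_fibres[OF \<open>finite VH\<close>]) auto
  then have card_VH: "real (card VH) = (\<Sum>j=1..r. real (ell j))"
    unfolding ell_sum[OF le_refl] by simp
  have "0 < card {u \<in> VH. col u = r}" using assms(1,5,7) by simp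
  then have "VH \<noteq> {}" by auto
  then have "x * (\<Sum>j=1..r. real (ell j)) \<le> 1"
    using assms(9) \<open>finite VH\<close> unfolding card_VH[symmetric] by (simp add: card_gt_0_iff less_divide_eq)
  define S where "S = {v \<in> VG. real (degree VG EG v) \<ge> \<delta>}"
  \<comment> \<open>Only the last clique vertex may have low degree.\<close>
  define T where "T k = (if k < r then S else VG)" for k
  have "x * real n \<le> (\<Sum>v\<in>VG. c v)" if cover: "frac_hom_cover VH EH VG EG c" for c
  proof (rule sum_frac_hom_cover_ge[OF cover assms(12) \<open>finite VH\<close> assms(3,4)])
    fix k v assume k: "k \<in> {1..r}" and vT: "\<forall>j\<in>{1..<k}. v j \<in> T j"
    have "x * real n * (\<Sum>j=k..r. real (ell j))
        \<le> (if k < r then real (card S) else real n) - real (k - 1) * (real n - \<delta>)"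
      by (rule scaled_tail_sum_le_greedy_bound[OF assms(1,6) k])
        (use assms(8,11,14) \<open>x * (\<Sum>j=1..r. real (ell j)) \<le> 1\<close> in \<open>simp_all add: S_def card_VH\<close>)
    also have "\<dots> = real (card (T k)) - real (k - 1) * (real (card VG) - \<delta>)"
      by (simp add: T_def assms(13))
    also have "\<dots> \<le> real (card (common_nbrs (T k) EG v (k - 1)))"
      using vT k by (intro card_common_nbrs_ge[OF assms(12)]) (auto simp: T_def S_def)
    finally show "x * real n * (\<Sum>j=k..r. real (card {u \<in> VH. col u = j}))
        \<le> real (card (common_nbrs (T k) EG v (k - 1)))"
      using ell_sum[of k] k by simp
  qed (use assms(8,10) \<open>0 < card {u \<in> VH. col u = r}\<close> in \<open>auto simp: T_def S_def\<close>)
  moreover have "frac_hom_cover VH EH VG EG (\<lambda>_. 1)"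
    using \<open>finite VG\<close> \<open>finite VH\<close> \<open>VH \<noteq> {}\<close> by (rule frac_hom_cover_const_one)
  ultimately show ?thesis
    unfolding frac_hom_cover_number_def by (intro cInf_greatest) auto
qed

end
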